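(* Let $(A,\cdot,[-,-],\varepsilon)$ be a Leibniz-Poisson color algebra. Then $(A,\cdot,\{-,-,-\},\varepsilon)$ is a ternary Leibniz-Poisson color algebra, where $\{x,y,z\}:=[x,y\cdot z]$ for all $x,y,z\in\mathcal{H}(A)$.
   Context: $G$ is an abelian group, $\mathbb{K}$ a field of characteristic $\neq 2$, $\mathcal{H}(V)$ the homogeneous elements of a $G$-graded space $V$; even maps preserve degree. A skew-symmetric bicharacter $\varepsilon:G\times G\to\mathbb{K}^*$ satisfies $\varepsilon(a,b)\varepsilon(b,a)=1$, $\varepsilon(a,b+c)=\varepsilon(a,b)\varepsilon(a,c)$, $\varepsilon(a+b,c)=\varepsilon(a,c)\varepsilon(b,c)$; $\varepsilon(x,y)$ means $\varepsilon$ of the degrees. A Leibniz-Poisson color algebra $(P,\cdot,[-,-],\varepsilon)$ is a $G$-graded space with even bilinear maps $\cdot$ and $[-,-]$ such that $(P,\cdot)$ is associative, $[[x,y],z]=[x,[y,z]]+\varepsilon(y,z)[[x,z],y]$, and $[x\cdot y,z]=x\cdot[y,z]+\varepsilon(y,z)[x,z]\cdot y$ for all homogeneous $x,y,z$. A ternary Leibniz-Poisson color algebra $(A,\cdot,[-,-,-],\varepsilon)$ is a $G$-graded space with an even associative product $\cdot$ and an even trilinear $[-,-,-]$ such that $[[x,y,z],t,u]=[x,y,[z,t,u]]+\varepsilon(z,t+u)[x,[y,t,u],z]+\varepsilon(y+z,t+u)[[x,t,u],y,z]$ and $[x\cdot y,z,t]=x\cdot[y,z,t]+\varepsilon(y,z+t)[x,z,t]\cdot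 y$ for all homogeneous $x,y,z,t,u$. *)

theory Defs
  imports Complex_Main
begin

text \<open>A G-graded vector space over the field 'k: the carrier is the type 'v with scalar
multiplication sc, and Vg g is the homogeneous component of degree g.\<close>

definition graded_space ::
  "('k::field \<Rightarrow> 'v::ab_group_add \<Rightarrow> 'v) \<Rightarrow> ('g::ab_group_add \<Rightarrow> 'v set) \<Rightarrow> bool" where
  "graded_space sc Vg \<longleftrightarrow>
     vector_space sc \<and>
     (\<forall>g. 0 \<in> Vg g \<and> (\<forall>x\<in>Vg g. \<forall>y\<in>Vg g. x + y \<in> Vg g) \<and> (\<forall>c. \<forall>x\<in>Vg g. sc c x \<in> Vg g)) \<and>
     (\<forall>v. \<exists>!f. finite {g. f g \<noteq> 0} \<and> (\<forall>g. f g \<in> Vg g) \<and> v = sum f {g. f g \<noteq> 0})"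

definition skew_bichar :: "('g::ab_group_add \<Rightarrow> 'g \<Rightarrow> 'k::field) \<Rightarrow> bool" where
  "skew_bichar eps \<longleftrightarrow>
     (\<forall>a b. eps a b \<noteq> 0) \<and>
     (\<forall>a b. eps a b * eps b a = 1) \<and>
     (\<forall>a b c. eps a (b + c) = eps a b * eps a c) \<and>
     (\<forall>a b c. eps (a + b) c = eps a c * eps b c)"

definition bilin :: "('k::field \<Rightarrow> 'v::ab_group_add \<Rightarrow> 'v) \<Rightarrow> ('v \<Rightarrow> 'v \<Rightarrow> 'v) \<Rightarrow> bool" where
  "bilin sc m \<longleftrightarrow>
     (\<forall>x. Vector_Spaces.linear sc sc (m x)) \<and> (\<forall>y. Vector_Spaces.linear sc sc (\<lambda>x. m x y))"

definition trilin ::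
  "('k::field \<Rightarrow> 'v::ab_group_add \<Rightarrow> 'v) \<Rightarrow> ('v \<Rightarrow> 'v \<Rightarrow> 'v \<Rightarrow> 'v) \<Rightarrow> bool" where
  "trilin sc t \<longleftrightarrow>
     (\<forall>y z. Vector_Spaces.linear sc sc (\<lambda>x. t x y z)) \<and>
     (\<forall>x z. Vector_Spaces.linear sc sc (\<lambda>y. t x y z)) \<and>
     (\<forall>x y. Vector_Spaces.linear sc sc (\<lambda>z. t x y z))"

definition even2 :: "('g::ab_group_add \<Rightarrow> 'v set) \<Rightarrow> ('v \<Rightarrow> 'v \<Rightarrow> 'v) \<Rightarrow> bool" where
  "even2 Vg m \<longleftrightarrow> (\<forall>a b x y. x \<in> Vg a \<longrightarrow> y \<in> Vg b \<longrightarrow> m x y \<in> Vg (a + b))"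

definition even3 :: "('g::ab_group_add \<Rightarrow> 'v set) \<Rightarrow> ('v \<Rightarrow> 'v \<Rightarrow> 'v \<Rightarrow> 'v) \<Rightarrow> bool" where
  "even3 Vg t \<longleftrightarrow>
     (\<forall>a b c x y z. x \<in> Vg a \<longrightarrow> y \<in> Vg b \<longrightarrow> z \<in> Vg c \<longrightarrow> t x y z \<in> Vg (a + b + c))"

definition LP_color_algebra ::
  "('k::field \<Rightarrow> 'v::ab_group_add \<Rightarrow> 'v) \<Rightarrow> ('g::ab_group_add \<Rightarrow> 'v set) \<Rightarrow>
   ('v \<Rightarrow> 'v \<Rightarrow> 'v) \<Rightarrow> ('v \<Rightarrow> 'v \<Rightarrow> 'v) \<Rightarrow> ('g \<Rightarrow> 'g \<Rightarrow> 'k) \<Rightarrow> bool" where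
  "LP_color_algebra sc Vg mul br eps \<longleftrightarrow>
     graded_space sc Vg \<and> skew_bichar eps \<and>
     bilin sc mul \<and> even2 Vg mul \<and> bilin sc br \<and> even2 Vg br \<and>
     (\<forall>a b c x y z. x \<in> Vg a \<longrightarrow> y \<in> Vg b \<longrightarrow> z \<in> Vg c \<longrightarrow>
        mul (mul x y) z = mul x (mul y z) \<and>
        br (br x y) z = br x (br y z) + sc (eps b c) (br (br x z) y) \<and>
        br (mul x y) z = mul x (br y z) + sc (eps b c) (mul (br x z) y))"

definition ternary_LP_color_algebra ::
  "('k::field \<Rightarrow> 'v::ab_group_add \<Rightarrow> 'v) \<Rightarrow> ('g::ab_group_add \<Rightarrow> 'v set) \<Rightarrow>
   ('v \<Rightarrow> 'v \<Rightarrow> 'v) \<Rightarrow> ('v \<Rightarrow> 'v \<Rightarrow> 'v \<Rightarrow> 'v) \<Rightarrow> ('g \<Rightarrow> 'g \<Rightarrow> 'k) \<Rightarrow> bool" where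
  "ternary_LP_color_algebra sc Vg mul tb eps \<longleftrightarrow>
     graded_space sc Vg \<and> skew_bichar eps \<and>
     bilin sc mul \<and> even2 Vg mul \<and> trilin sc tb \<and> even3 Vg tb \<and>
     (\<forall>a b c x y z. x \<in> Vg a \<longrightarrow> y \<in> Vg b \<longrightarrow> z \<in> Vg c \<longrightarrow>
        mul (mul x y) z = mul x (mul y z)) \<and>
     (\<forall>a b c d e x y z t u. x \<in> Vg a \<longrightarrow> y \<in> Vg b \<longrightarrow> z \<in> Vg c \<longrightarrow> t \<in> Vg d \<longrightarrow> u \<in> Vg e \<longrightarrow>
        tb (tb x y z) t u = tb x y (tb z t u) + sc (eps c (d + e)) (tb x (tb y t u) z)
                            + sc (eps (b + c) (d + e)) (tb (tb x t u) y z)) \<and>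
     (\<forall>a b c d x y z t. x \<in> Vg a \<longrightarrow> y \<in> Vg b \<longrightarrow> z \<in> Vg c \<longrightarrow> t \<in> Vg d \<longrightarrow>
        tb (mul x y) z t = mul x (tb y z t) + sc (eps b (c + d)) (mul (tb x z t) y))"

end

theory Submission
  imports Defs
begin

text \<open>Both ternary identities come from applying a binary identity with the product
\<open>t \<cdot> u\<close> (resp. \<open>z \<cdot> t\<close>) as a single homogeneous argument of degree \<open>d + e\<close>: the Leibniz
identity for \<open>[[x, y \<cdot> z], t \<cdot> u]\<close>, followed by the Poisson identity for \<open>[y \<cdot> z, t \<cdot> u]\<close>
inside the linear map \<open>[x, -]\<close>, gives the ternary Leibniz identity; the Poisson identity for
\<open>[x \<cdot> y, z \<cdot> t]\<close> is literally the ternary Poisson identity.\<close>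

lemma trilin_bracket_mul:
  assumes "bilin sc br" and "bilin sc mul"
  shows "trilin sc (\<lambda>x y z. br x (mul y z))"
proof -
  have br: "Vector_Spaces.linear sc sc (br x)" "Vector_Spaces.linear sc sc (\<lambda>x. br x y)" for x y
    using assms(1) unfolding bilin_def by auto
  have mul: "Vector_Spaces.linear sc sc (mul x)" "Vector_Spaces.linear sc sc (\<lambda>x. mul x y)" for x y
    using assms(2) unfolding bilin_def by auto
  show ?thesis
    unfolding trilin_def
    using br(2) Vector_Spaces.linear_compose[OF mul(2) br(1)]
      Vector_Spaces.linear_compose[OF mul(1) br(1)]
    by (simp add: o_def)
qed

lemma even3_bracket_mul:
  assumes "even2 Vg br" and "even2 Vg mul"
  shows "even3 Vg (\<lambda>x y z. br x (mul y z))"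
  using assms unfolding even2_def even3_def by (metis add.assoc)

lemma LP_color_algebra_mul_assoc:
  assumes "LP_color_algebra sc Vg mul br eps" "x \<in> Vg a" "y \<in> Vg b" "z \<in> Vg c"
  shows "mul (mul x y) z = mul x (mul y z)"
  using assms unfolding LP_color_algebra_def by blast

lemma LP_color_algebra_leibniz:
  assumes "LP_color_algebra sc Vg mul br eps" "x \<in> Vg a" "y \<in> Vg b" "z \<in> Vg c"
  shows "br (br x y) z = br x (br y z) + sc (eps b c) (br (br x z) y)"
  using assms unfolding LP_color_algebra_def by blast

lemma LP_color_algebra_poisson:
  assumes "LP_color_algebra sc Vg mul br eps" "x \<in> Vg a" "y \<in> Vg b" "z \<in> Vg c"
  shows "br (mul x y) z = mul x (br y z) + sc (eps b c) (mul (br x z) y)"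
  using assms unfolding LP_color_algebra_def by blast

lemma LP_color_algebra_mul_homogeneous:
  assumes "LP_color_algebra sc Vg mul br eps" "x \<in> Vg a" "y \<in> Vg b"
  shows "mul x y \<in> Vg (a + b)"
  using assms unfolding LP_color_algebra_def even2_def by blast

lemma ternary_leibniz_bracket_mul:
  assumes LP: "LP_color_algebra sc Vg mul br eps"
    and x: "x \<in> Vg a" and y: "y \<in> Vg b" and z: "z \<in> Vg c" and t: "t \<in> Vg d" and u: "u \<in> Vg e"
  shows "br (br x (mul y z)) (mul t u) = br x (mul y (br z (mul t u)))
           + sc (eps c (d + e)) (br x (mul (br y (mul t u)) z))
           + sc (eps (b + c) (d + e)) (br (br x (mul t u)) (mul y z))"
proof -
  have tu: "mul t u \<in> Vg (d + e)" and yz: "mul y z \<in> Vg (b + c)"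
    using LP_color_algebra_mul_homogeneous[OF LP] t u y z by auto
  have "Vector_Spaces.linear sc sc (br x)"
    using LP unfolding LP_color_algebra_def bilin_def by blast
  then have br_add: "br x (p + q) = br x p + br x q" and br_scale: "br x (sc k p) = sc k (br x p)"
    for p q k
    unfolding Vector_Spaces.linear_iff by blast+
  show ?thesis
    unfolding LP_color_algebra_leibniz[OF LP x yz tu] LP_color_algebra_poisson[OF LP y z tu]
      br_add br_scale
    by simp
qed

lemma ternary_poisson_bracket_mul:
  assumes LP: "LP_color_algebra sc Vg mul br eps"
    and "x \<in> Vg a" "y \<in> Vg b" "z \<in> Vg c" "t \<in> Vg d"
  shows "br (mul x y) (mul z t) = mul x (br y (mul z t)) + sc (eps b (c + d)) (mul (br x (mul z t)) y)"
  using assms LP_color_algebra_poisson[OF LP] LP_color_algebra_mul_homogeneous[OF LP] by blast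

theorem mainTheorem18:
  fixes sc :: "'k::field \<Rightarrow> 'v::ab_group_add \<Rightarrow> 'v"
    and Vg :: "'g::ab_group_add \<Rightarrow> 'v set"
    and mul br :: "'v \<Rightarrow> 'v \<Rightarrow> 'v"
    and eps :: "'g \<Rightarrow> 'g \<Rightarrow> 'k"
  assumes "(2::'k) \<noteq> 0"
    and LP: "LP_color_algebra sc Vg mul br eps"
  shows "ternary_LP_color_algebra sc Vg mul (\<lambda>x y z. br x (mul y z)) eps"
proof -
  have components: "graded_space sc Vg" "skew_bichar eps" "bilin sc mul" "even2 Vg mul"
      "bilin sc br" "even2 Vg br"
    using LP unfolding LP_color_algebra_def by auto
  show ?thesis
    unfolding ternary_LP_color_algebra_def
    using components trilin_bracket_mul[OF components(5,3)] even3_bracket_mul[OF components(6,4)]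
      LP_color_algebra_mul_assoc[OF LP] ternary_leibniz_bracket_mul[OF LP]
      ternary_poisson_bracket_mul[OF LP]
    by (intro conjI allI impI) (assumption | blast)+
qed

end
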